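(* Let $h=h^*\in C^\infty(\mathbb{T}_\theta^4)$. Let $\mathcal{H}_\varphi$ be the Hilbert space completion of $C(\mathbb{T}_\theta^4)$ with respect to $(a,b)_\varphi=\varphi_0(b^*a\,e^{-2h})$, and let $\mathcal{K}$ be the completion of $C(\mathbb{T}_\theta^4)$ with respect to $(a,b)_1=\varphi_0(b^*a\,e^{-h})$. Let $d:\mathcal{H}_\varphi\to\mathcal{K}^{\oplus 4}$ be the operator with domain $C^\infty(\mathbb{T}_\theta^4)$ given by $d(a)=(\partial_1 a,\partial_2 a,\bar\partial_1 a,\bar\partial_2 a)$, where $$\partial_1=\delta_1-i\delta_3,\quad \partial_2=\delta_2-i\delta_4,\quad \bar\partial_1=\delta_1+i\delta_3,\quad \bar\partial_2=\delta_2+i\delta_4.$$ Then the operator $d^*d$ acting in $\mathcal{H}_\varphi$ is anti-unitarily equivalent (via an anti-unitary map preserving $C^\infty(\mathbb{T}_\theta^4)$) to the operator $$e^{h}\bar\partial_1 e^{-h}\partial_1 e^{h}+e^{h}\partial_1 e^{-h}\bar\partial_1 e^{h}+e^{h}\bar\partial_2 e^{-h}\partial_2 e^{h}+e^{h}\partial_2 e^{-h}\bar\partial_2 e^{h}$$ acting in $\mathcal{H}_0$ on the domain $C^\infty(\mathbb{T}_\theta^4)$, where $e^{\pm h}$ act by left multiplication.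
   Context: Let $\theta=(\theta_{kl})$ be a real skew-symmetric $4\times 4$ matrix. $C(\mathbb{T}_\theta^4)$ is the universal unital $C^*$-algebra generated by unitaries $U_1,\dots,U_4$ with $U_kU_l=e^{2\pi i\theta_{kl}}U_lU_k$. For $\ell\in\mathbb{Z}^4$ write $U^\ell=U_1^{\ell_1}U_2^{\ell_2}U_3^{\ell_3}U_4^{\ell_4}$. $C^\infty(\mathbb{T}_\theta^4)$ is the dense $*$-subalgebra of elements $\sum_{\ell\in\mathbb{Z}^4}a_\ell U^\ell$ with rapidly decreasing coefficients $(a_\ell)$. $\varphi_0$ is the faithful tracial state with $\varphi_0(\sum a_\ell U^\ell)=a_0$. $\delta_1,\dots,\delta_4$ are the commuting derivations of $C^\infty(\mathbb{T}_\theta^4)$ determined by $\delta_j(U_k)=\delta_{jk}U_k$ (Kronecker delta); they satisfy $\delta_j(a^* )=-\delta_j(a)^*$ and $\varphi_0\circ\delta_j=0$. $\mathcal{H}_0$ is the Hilbert space completion of $C(\mathbb{T}_\theta^4)$ with respect to $(a,b)=\varphi_0(b^*a)$. *)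

theory Defs
  imports "HOL-Analysis.Analysis"
begin

text \<open>Concrete model of the smooth noncommutative 4-torus.
  Lattice points of Z^4 are functions nat => int vanishing outside {1..4};
  an element sum_l a_l U^l is represented by its coefficient function.\<close>

type_synonym lat = "nat \<Rightarrow> int"
type_synonym nct = "lat \<Rightarrow> complex"

definition lat4 :: "lat set" where
  "lat4 = {l. \<forall>k. k \<notin> {1..4} \<longrightarrow> l k = 0}"

definition lsub :: "lat \<Rightarrow> lat \<Rightarrow> lat" where
  "lsub n l = (\<lambda>k. n k - l k)"

definition lneg :: "lat \<Rightarrow> lat" where
  "lneg n = (\<lambda>k. - n k)"

definition lzero :: lat where
  "lzero = (\<lambda>k. 0)"

definition lnorm :: "lat \<Rightarrow> int" where
  "lnorm l = (\<Sum>k\<in>{1..4}. \<bar>l k\<bar>)"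

text \<open>Rapidly decreasing coefficients: the elements of C^infty(T_theta^4).\<close>
definition smooth :: "nct \<Rightarrow> bool" where
  "smooth a \<longleftrightarrow> (\<forall>l. l \<notin> lat4 \<longrightarrow> a l = 0) \<and>
     (\<forall>p::nat. \<exists>C::real. \<forall>l. (1 + real_of_int (lnorm l)) ^ p * cmod (a l) \<le> C)"

definition Csm :: "nct set" where
  "Csm = {a. smooth a}"

text \<open>U^l U^m = twist l m U^(l+m), from U_k U_j = e^(2 pi i theta_kj) U_j U_k.\<close>
definition twist :: "(nat \<Rightarrow> nat \<Rightarrow> real) \<Rightarrow> lat \<Rightarrow> lat \<Rightarrow> complex" where
  "twist \<theta> l m = cis (2 * pi * (\<Sum>j\<in>{1..4}. \<Sum>k\<in>{j<..4}. \<theta> k j * of_int (l k) * of_int (m j)))"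

definition tmult :: "(nat \<Rightarrow> nat \<Rightarrow> real) \<Rightarrow> nct \<Rightarrow> nct \<Rightarrow> nct" where
  "tmult \<theta> a b = (\<lambda>n. if n \<in> lat4
      then (\<Sum>\<^sub>\<infinity>l\<in>lat4. a l * b (lsub n l) * twist \<theta> l (lsub n l)) else 0)"

text \<open>(U^l)^* = (U^l)^(-1) = cnj (twist (-l) l) U^(-l).\<close>
definition tstar :: "(nat \<Rightarrow> nat \<Rightarrow> real) \<Rightarrow> nct \<Rightarrow> nct" where
  "tstar \<theta> a = (\<lambda>n. cnj (a (lneg n)) * cnj (twist \<theta> n (lneg n)))"

definition tone :: nct where
  "tone = (\<lambda>l. if l = lzero then 1 else 0)"

definition tadd :: "nct \<Rightarrow> nct \<Rightarrow> nct" where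
  "tadd a b = (\<lambda>l. a l + b l)"

definition tscale :: "complex \<Rightarrow> nct \<Rightarrow> nct" where
  "tscale c a = (\<lambda>l. c * a l)"

fun tpow :: "(nat \<Rightarrow> nat \<Rightarrow> real) \<Rightarrow> nct \<Rightarrow> nat \<Rightarrow> nct" where
  "tpow \<theta> a 0 = tone"
| "tpow \<theta> a (Suc n) = tmult \<theta> a (tpow \<theta> a n)"

text \<open>Exponential e^a = sum_n a^n / n! (the series converges absolutely in the
  l^1 (twisted convolution) Banach algebra, hence coefficientwise, and agrees
  with the C*-algebraic exponential).\<close>
definition texp :: "(nat \<Rightarrow> nat \<Rightarrow> real) \<Rightarrow> nct \<Rightarrow> nct" where
  "texp \<theta> a = (\<lambda>l. \<Sum>n. tpow \<theta> a n l / of_nat (fact n))"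

definition phi0 :: "nct \<Rightarrow> complex" where
  "phi0 a = a lzero"

definition delta :: "nat \<Rightarrow> nct \<Rightarrow> nct" where
  "delta j a = (\<lambda>l. of_int (l j) * a l)"

definition dd1 :: "nct \<Rightarrow> nct" where
  "dd1 a = (\<lambda>l. delta 1 a l - \<i> * delta 3 a l)"
definition dd2 :: "nct \<Rightarrow> nct" where
  "dd2 a = (\<lambda>l. delta 2 a l - \<i> * delta 4 a l)"
definition dbar1 :: "nct \<Rightarrow> nct" where
  "dbar1 a = (\<lambda>l. delta 1 a l + \<i> * delta 3 a l)"
definition dbar2 :: "nct \<Rightarrow> nct" where
  "dbar2 a = (\<lambda>l. delta 2 a l + \<i> * delta 4 a l)"

text \<open>Inner products on C^infty (restrictions of those of the completions).\<close>
definition inner0 :: "(nat \<Rightarrow> nat \<Rightarrow> real) \<Rightarrow> nct \<Rightarrow> nct \<Rightarrow> complex" where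
  "inner0 \<theta> a b = phi0 (tmult \<theta> (tstar \<theta> b) a)"

definition inner_phi :: "(nat \<Rightarrow> nat \<Rightarrow> real) \<Rightarrow> nct \<Rightarrow> nct \<Rightarrow> nct \<Rightarrow> complex" where
  "inner_phi \<theta> h a b = phi0 (tmult \<theta> (tmult \<theta> (tstar \<theta> b) a) (texp \<theta> (tscale (-2) h)))"

definition inner1 :: "(nat \<Rightarrow> nat \<Rightarrow> real) \<Rightarrow> nct \<Rightarrow> nct \<Rightarrow> nct \<Rightarrow> complex" where
  "inner1 \<theta> h a b = phi0 (tmult \<theta> (tmult \<theta> (tstar \<theta> b) a) (texp \<theta> (tscale (-1) h)))"

definition dop :: "nct \<Rightarrow> nct list" where
  "dop a = [dd1 a, dd2 a, dbar1 a, dbar2 a]"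

definition innerK4 :: "(nat \<Rightarrow> nat \<Rightarrow> real) \<Rightarrow> nct \<Rightarrow> nct list \<Rightarrow> nct list \<Rightarrow> complex" where
  "innerK4 \<theta> h xs ys = (\<Sum>i<4. inner1 \<theta> h (xs ! i) (ys ! i))"

definition Sop :: "(nat \<Rightarrow> nat \<Rightarrow> real) \<Rightarrow> nct \<Rightarrow> nct \<Rightarrow> nct" where
  "Sop \<theta> h a =
    (let eh = texp \<theta> h; emh = texp \<theta> (tscale (-1) h);
         L = tmult \<theta>;
         term = (\<lambda>D1 D2. L eh (D1 (L emh (D2 (L eh a)))))
     in tadd (tadd (term dbar1 dd1) (term dd1 dbar1)) (tadd (term dbar2 dd2) (term dd2 dbar2)))"

end

theory Submission imports Defs begin

text \<open>The anti-unitary is \<open>W a = e^-h a^*\<close>: by the trace property \<open>(W a, W b)_0 = \<phi>\<^sub>0(b e^-2h a^*)\<close>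
  is the conjugate of \<open>(a, b)_\<phi>\<close>.  Because \<open>\<phi>\<^sub>0\<close> vanishes on derivations, integration by parts gives
  \<open>d^*d a = (e^2h X)^*\<close> with \<open>X = \<Sum>\<^sub>j (dbar_j e^-h d_j a^* + d_j e^-h dbar_j a^*)\<close>; substituting
  \<open>a^* = e^h W a\<close> yields \<open>W (d^*d a) = e^h X\<close>, the stated operator applied to \<open>W a\<close>.  The exponentials
  are handled through \<open>e^sh e^th = e^(s+t)h\<close>, a Cauchy product of series converging absolutely in
  weighted \<open>l^1\<close> norms.\<close>

definition ladd :: "lat \<Rightarrow> lat \<Rightarrow> lat" where
  "ladd l m = (\<lambda>k. l k + m k)"

lemma lsub_lat4: "n \<in> lat4 \<Longrightarrow> l \<in> lat4 \<Longrightarrow> lsub n l \<in> lat4"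
  unfolding lat4_def lsub_def by auto

lemma ladd_lat4: "n \<in> lat4 \<Longrightarrow> l \<in> lat4 \<Longrightarrow> ladd n l \<in> lat4"
  unfolding lat4_def ladd_def by auto

lemma lneg_lat4_iff [simp]: "lneg n \<in> lat4 \<longleftrightarrow> n \<in> lat4"
  unfolding lat4_def lneg_def by auto

lemma lzero_lat4 [simp]: "lzero \<in> lat4"
  unfolding lat4_def lzero_def by auto

lemma lneg_lneg [simp]: "lneg (lneg n) = n"
  unfolding lneg_def by auto

lemma lneg_lzero [simp]: "lneg lzero = lzero"
  unfolding lneg_def lzero_def by auto

lemma lneg_eq_lzero_iff [simp]: "lneg n = lzero \<longleftrightarrow> n = lzero"
  unfolding lneg_def lzero_def by (auto simp: fun_eq_iff)

lemma lsub_lsub [simp]: "lsub n (lsub n l) = l"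
  unfolding lsub_def by auto

lemma lsub_self [simp]: "lsub n n = lzero"
  unfolding lsub_def lzero_def by auto

lemma lsub_lzero [simp]: "lsub n lzero = n"
  unfolding lsub_def lzero_def by auto

lemma lzero_lsub: "lsub lzero l = lneg l"
  unfolding lsub_def lzero_def lneg_def by auto

lemma lsub_eq_lzero_iff: "lsub n l = lzero \<longleftrightarrow> l = n"
  unfolding lsub_def lzero_def by (auto simp: fun_eq_iff)

lemma ladd_lsub [simp]: "ladd l (lsub n l) = n"
  unfolding ladd_def lsub_def by auto

lemma lsub_ladd_left [simp]: "lsub (ladd l k) l = k"
  unfolding lsub_def ladd_def by auto

lemma lsub_ladd_right [simp]: "lsub (ladd l n) n = l"
  unfolding lsub_def ladd_def by auto

lemma ladd_lsub_right [simp]: "ladd (lsub m n) n = m"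
  unfolding ladd_def lsub_def by auto

lemma lsub_lsub_lsub: "lsub (lsub n l) (lsub m l) = lsub n m"
  unfolding lsub_def by auto

lemma lneg_lsub: "lsub (lneg n) l = lneg (ladd l n)"
  unfolding lsub_def lneg_def ladd_def by auto

lemma lneg_lsub_ladd [simp]: "lneg (lsub n (ladd l n)) = l"
  unfolding lsub_def lneg_def ladd_def by auto

lemma lnorm_nonneg: "0 \<le> lnorm l"
  unfolding lnorm_def by (simp add: sum_nonneg)

lemma lnorm_lneg [simp]: "lnorm (lneg l) = lnorm l"
  unfolding lnorm_def lneg_def by simp

lemma lnorm_lzero [simp]: "lnorm lzero = 0"
  unfolding lnorm_def lzero_def by simp

lemma lnorm_ladd_le: "lnorm (ladd l m) \<le> lnorm l + lnorm m"
  unfolding lnorm_def ladd_def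
  by (simp add: sum.distrib[symmetric] sum_mono abs_triangle_ineq)

lemma lnorm_eq: "lnorm l = \<bar>l 1\<bar> + \<bar>l 2\<bar> + \<bar>l 3\<bar> + \<bar>l 4\<bar>"
  unfolding lnorm_def by (simp add: numeral_eq_Suc atLeastAtMostSuc_conv)

section \<open>Polynomial weights on the lattice\<close>

definition lweight :: "nat \<Rightarrow> lat \<Rightarrow> real" where
  "lweight p l = (1 + real_of_int (lnorm l)) ^ p"

lemma lweight_ge_1: "1 \<le> lweight p l"
  unfolding lweight_def using lnorm_nonneg[of l] by simp

lemma lweight_pos: "0 < lweight p l"
  using lweight_ge_1[of p l] by simp

lemma lweight_nonneg [simp]: "0 \<le> lweight p l"
  using lweight_pos[of p l] by simp

lemma lweight_0 [simp]: "lweight 0 l = 1"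
  unfolding lweight_def by simp

lemma lweight_add: "lweight (p + q) l = lweight p l * lweight q l"
  unfolding lweight_def by (simp add: power_add)

lemma lweight_lneg [simp]: "lweight p (lneg l) = lweight p l"
  unfolding lweight_def by simp

lemma lweight_lzero [simp]: "lweight p lzero = 1"
  unfolding lweight_def by simp

lemma lweight_lsub_le: "lweight p n \<le> lweight p l * lweight p (lsub n l)"
proof -
  have "lnorm n \<le> lnorm l + lnorm (lsub n l)"
    using lnorm_ladd_le[of l "lsub n l"] by simp
  hence "1 + real_of_int (lnorm n) \<le> (1 + real_of_int (lnorm l)) * (1 + real_of_int (lnorm (lsub n l)))"
    using lnorm_nonneg[of l] lnorm_nonneg[of "lsub n l"]
    by (simp add: algebra_simps) (smt (verit) mult_nonneg_nonneg of_int_add of_int_le_iff of_int_nonneg)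
  hence "(1 + real_of_int (lnorm n)) ^ p \<le> ((1 + real_of_int (lnorm l)) * (1 + real_of_int (lnorm (lsub n l)))) ^ p"
    using lnorm_nonneg[of n] by (intro power_mono) auto
  thus ?thesis unfolding lweight_def by (simp add: power_mult_distrib)
qed

lemma summable_on_product_nonneg:
  fixes f :: "'a \<Rightarrow> real" and g :: "'b \<Rightarrow> real"
  assumes "f summable_on A" "g summable_on B" "\<And>x. x \<in> A \<Longrightarrow> 0 \<le> f x" "\<And>y. y \<in> B \<Longrightarrow> 0 \<le> g y"
  shows "(\<lambda>(x, y). f x * g y) summable_on A \<times> B"
proof -
  have "(\<lambda>z. f (fst z) * g (snd z)) summable_on Sigma A (\<lambda>_. B)"
  proof (rule summable_on_SigmaI[where g = "\<lambda>x. f x * infsum g B"])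
    fix x assume "x \<in> A"
    show "((\<lambda>y. f (fst (x, y)) * g (snd (x, y))) has_sum f x * infsum g B) B"
      using has_sum_cmult_right[OF has_sum_infsum[OF assms(2)], of "f x"] by simp
  next
    show "(\<lambda>x. f x * infsum g B) summable_on A"
      using summable_on_cmult_left[OF assms(1)] by simp
  qed (use assms in simp)
  thus ?thesis by (simp add: case_prod_unfold)
qed

lemma summable_on_inverse_square_int:
  "(\<lambda>z::int. 1 / (1 + real_of_int \<bar>z\<bar>) ^ 2) summable_on UNIV"
proof -
  let ?f = "\<lambda>z::int. 1 / (1 + real_of_int \<bar>z\<bar>) ^ 2"
  have "summable (\<lambda>n::nat. inverse (real (Suc n) ^ 2))"
    using inverse_power_summable[of 2, where 'a = real] by (subst summable_Suc_iff) auto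
  hence nat: "(\<lambda>n::nat. 1 / (1 + real n) ^ 2) summable_on UNIV"
    by (subst summable_on_UNIV_nonneg_real_iff) (auto simp: divide_inverse add.commute)
  have "?f summable_on range int" "?f summable_on range (\<lambda>n. - int n)"
    using nat by (subst summable_on_reindex; force simp: o_def inj_on_def)+
  hence "?f summable_on (range int \<union> range (\<lambda>n. - int n))"
    by (rule summable_on_union)
  moreover have "range int \<union> range (\<lambda>n. - int n) = UNIV"
    by (auto intro: int_cases2)
  ultimately show ?thesis by simp
qed

lemma inj_on_lat4_coordinates: "inj_on (\<lambda>l. (l 1, l 2, l 3, l 4)) lat4"
proof (rule inj_onI)
  fix x y :: lat assume "x \<in> lat4" "y \<in> lat4" and eq: "(x 1, x 2, x 3, x 4) = (y 1, y 2, y 3, y 4)"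
  show "x = y"
  proof
    fix k show "x k = y k"
    proof (cases "k \<in> {1..4}")
      case True hence "k = 1 \<or> k = 2 \<or> k = 3 \<or> k = 4" by auto
      thus ?thesis using eq by auto
    qed (use \<open>x \<in> lat4\<close> \<open>y \<in> lat4\<close> in \<open>auto simp: lat4_def\<close>)
  qed
qed

lemma summable_on_inverse_lweight: "(\<lambda>l. 1 / lweight 8 l) summable_on lat4"
proof -
  define f :: "int \<Rightarrow> real" where "f z = 1 / (1 + real_of_int \<bar>z\<bar>) ^ 2" for z
  define e :: "lat \<Rightarrow> int \<times> int \<times> int \<times> int" where "e l = (l 1, l 2, l 3, l 4)" for l
  have f_nonneg: "0 \<le> f z" for z by (simp add: f_def)
  have inj: "inj_on e lat4"
    unfolding e_def by (rule inj_on_lat4_coordinates)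
  have "(\<lambda>(a, b, c, d). f a * (f b * (f c * f d))) summable_on UNIV \<times> UNIV \<times> UNIV \<times> UNIV"
  proof -
    note f = summable_on_inverse_square_int[folded f_def]
    have "(\<lambda>(c, d). f c * f d) summable_on UNIV \<times> UNIV"
      by (rule summable_on_product_nonneg[OF f f]) (auto simp: f_nonneg)
    hence "(\<lambda>(b, cd). f b * (case cd of (c, d) \<Rightarrow> f c * f d)) summable_on UNIV \<times> UNIV \<times> UNIV"
      by (rule summable_on_product_nonneg[OF f]) (auto simp: f_nonneg)
    hence "(\<lambda>(a, bcd). f a * (case bcd of (b, cd) \<Rightarrow> f b * (case cd of (c, d) \<Rightarrow> f c * f d))) summable_on UNIV \<times> UNIV \<times> UNIV \<times> UNIV"
      by (rule summable_on_product_nonneg[OF f]) (auto simp: f_nonneg)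
    thus ?thesis by (simp add: case_prod_unfold)
  qed
  hence "(\<lambda>(a, b, c, d). f a * (f b * (f c * f d))) summable_on e ` lat4"
    by (rule summable_on_subset) auto
  hence "(\<lambda>l. f (l 1) * (f (l 2) * (f (l 3) * f (l 4)))) summable_on lat4"
    unfolding summable_on_reindex[OF inj] by (simp add: o_def e_def)
  thus ?thesis
  proof (rule summable_on_comparison_test)
    fix l
    let ?L = "1 + real_of_int (lnorm l)"
    have le: "1 + real_of_int \<bar>l k\<bar> \<le> ?L" if "k \<in> {1, 2, 3, 4}" for k
      using that by (auto simp: lnorm_eq)
    have pos: "0 < 1 + real_of_int \<bar>l k\<bar>" for k
      by (smt (verit) of_int_nonneg abs_ge_zero)
    have "(1 + real_of_int \<bar>l 1\<bar>)^2 * ((1 + real_of_int \<bar>l 2\<bar>)^2 * ((1 + real_of_int \<bar>l 3\<bar>)^2 * (1 + real_of_int \<bar>l 4\<bar>)^2))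
          \<le> ?L^2 * (?L^2 * (?L^2 * ?L^2))"
      by (intro mult_mono power_mono le) (auto simp: pos less_imp_le)
    also have "\<dots> = lweight 8 l" unfolding lweight_def by (simp add: power_add[symmetric])
    finally show "1 / lweight 8 l \<le> f (l 1) * (f (l 2) * (f (l 3) * f (l 4)))"
      using pos lweight_pos[of 8 l] by (simp add: f_def divide_simps)
  qed simp
qed

lemma summable_on_norm_dominated:
  fixes f :: "'a \<Rightarrow> 'b::banach"
  assumes "g summable_on A" "\<And>x. x \<in> A \<Longrightarrow> norm (f x) \<le> g x"
  shows "f summable_on A"
proof (rule abs_summable_summable)
  show "(\<lambda>x. norm (f x)) summable_on A"
    by (rule summable_on_comparison_test[OF assms(1)]) (use assms(2) in auto)
qed

lemma smooth_iff_lweight: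
  "smooth a \<longleftrightarrow> (\<forall>l. l \<notin> lat4 \<longrightarrow> a l = 0) \<and> (\<forall>p. \<exists>C. \<forall>l. lweight p l * cmod (a l) \<le> C)"
  unfolding smooth_def lweight_def by simp

lemma smooth_vanishes: "smooth a \<Longrightarrow> l \<notin> lat4 \<Longrightarrow> a l = 0"
  unfolding smooth_def by auto

lemma smooth_lweight_bounded: "smooth a \<Longrightarrow> \<exists>C. \<forall>l. lweight p l * cmod (a l) \<le> C"
  unfolding smooth_iff_lweight by auto

lemma smooth_bounded:
  assumes "smooth a" obtains C where "\<And>l. cmod (a l) \<le> C" "0 \<le> C"
proof -
  obtain C where C: "\<And>l. cmod (a l) \<le> C" using smooth_lweight_bounded[OF assms, of 0] by auto
  moreover have "0 \<le> C" using C[of lzero] norm_ge_zero order_trans by blast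
  ultimately show ?thesis using that by blast
qed

lemma smooth_lweight_summable:
  assumes "smooth a" shows "(\<lambda>l. lweight p l * cmod (a l)) summable_on lat4"
proof -
  obtain C where C: "\<And>l. lweight (p + 8) l * cmod (a l) \<le> C"
    using smooth_lweight_bounded[OF assms] by blast
  have "lweight p l * cmod (a l) \<le> C * (1 / lweight 8 l)" for l
  proof -
    have "lweight p l * cmod (a l) = lweight (p + 8) l * cmod (a l) * (1 / lweight 8 l)"
      using lweight_pos[of 8 l] by (simp add: lweight_add field_simps)
    also have "\<dots> \<le> C * (1 / lweight 8 l)"
      using C[of l] lweight_pos[of 8 l] by (intro mult_right_mono) auto
    finally show ?thesis .
  qed
  thus ?thesis
    by (intro summable_on_comparison_test[OF summable_on_cmult_right[OF summable_on_inverse_lweight]])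
       auto
qed

lemma smooth_abs_summable: "smooth a \<Longrightarrow> (\<lambda>l. cmod (a l)) summable_on lat4"
  using smooth_lweight_summable[of a 0] by simp

definition wnorm :: "nat \<Rightarrow> nct \<Rightarrow> real" where
  "wnorm p a = (\<Sum>\<^sub>\<infinity>l\<in>lat4. lweight p l * cmod (a l))"

lemma wnorm_nonneg: "0 \<le> wnorm p a"
  unfolding wnorm_def by (rule infsum_nonneg) simp

lemma norm_twist [simp]: "cmod (twist \<theta> l m) = 1"
  unfolding twist_def by simp

lemma tmult_lat4: "n \<in> lat4 \<Longrightarrow> tmult \<theta> a b n = (\<Sum>\<^sub>\<infinity>l\<in>lat4. a l * b (lsub n l) * twist \<theta> l (lsub n l))"
  by (simp add: tmult_def)

lemma tmult_vanishes: "n \<notin> lat4 \<Longrightarrow> tmult \<theta> a b n = 0"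
  by (simp add: tmult_def)

lemma tmult_summand_summable:
  assumes "smooth a" and "\<And>m. cmod (b m) \<le> B"
  shows "(\<lambda>l. a l * b (lsub n l) * twist \<theta> l (lsub n l)) summable_on lat4"
proof (rule summable_on_norm_dominated[OF summable_on_cmult_left[OF smooth_abs_summable[OF assms(1)], of B]])
  fix l show "norm (a l * b (lsub n l) * twist \<theta> l (lsub n l)) \<le> cmod (a l) * B"
    by (simp add: norm_mult assms(2) mult_left_mono)
qed

lemma lweight_tmult_le:
  assumes a: "smooth a" and b: "\<And>m. lweight p m * cmod (b m) \<le> B"
  shows "lweight p n * cmod (tmult \<theta> a b n) \<le> wnorm p a * B"
proof -
  have "0 \<le> B" using b[of lzero] by (meson order_trans mult_nonneg_nonneg lweight_nonneg norm_ge_zero)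
  have b_bound: "cmod (b m) \<le> B" for m
    using b[of m] mult_right_mono[OF lweight_ge_1[of p m] norm_ge_zero[of "b m"]] by simp
  show ?thesis
  proof (cases "n \<in> lat4")
    case False thus ?thesis using \<open>0 \<le> B\<close> wnorm_nonneg by (simp add: tmult_vanishes)
  next
    case True
    let ?f = "\<lambda>l. a l * b (lsub n l) * twist \<theta> l (lsub n l)"
    have f: "(\<lambda>l. cmod (?f l)) summable_on lat4"
      using tmult_summand_summable[OF a b_bound] by (simp add: summable_on_iff_abs_summable_on_complex)
    have "lweight p n * cmod (tmult \<theta> a b n) \<le> lweight p n * (\<Sum>\<^sub>\<infinity>l\<in>lat4. cmod (?f l))"
      using True by (auto simp: tmult_lat4 intro!: mult_left_mono norm_infsum_bound f)
    also have "\<dots> = (\<Sum>\<^sub>\<infinity>l\<in>lat4. lweight p n * cmod (?f l))"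
      by (simp add: infsum_cmult_right')
    also have "\<dots> \<le> (\<Sum>\<^sub>\<infinity>l\<in>lat4. lweight p l * cmod (a l) * B)"
    proof (rule infsum_mono)
      fix l
      have "lweight p n * cmod (?f l) \<le> (lweight p l * lweight p (lsub n l)) * (cmod (a l) * cmod (b (lsub n l)))"
        by (auto simp: norm_mult intro!: mult_right_mono lweight_lsub_le)
      also have "\<dots> = (lweight p l * cmod (a l)) * (lweight p (lsub n l) * cmod (b (lsub n l)))"
        by (simp add: mult_ac)
      also have "\<dots> \<le> (lweight p l * cmod (a l)) * B"
        by (intro mult_left_mono b) simp
      finally show "lweight p n * cmod (?f l) \<le> lweight p l * cmod (a l) * B" .
    qed (use f smooth_lweight_summable[OF a] in \<open>auto intro: summable_on_cmult_left summable_on_cmult_right\<close>)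
    also have "\<dots> = wnorm p a * B" unfolding wnorm_def by (simp add: infsum_cmult_left')
    finally show ?thesis .
  qed
qed

lemma smooth_tmult: "smooth a \<Longrightarrow> smooth b \<Longrightarrow> smooth (tmult \<theta> a b)"
  unfolding smooth_iff_lweight[of "tmult \<theta> a b"]
  by (meson lweight_tmult_le smooth_lweight_bounded tmult_vanishes)

lemma smooth_tadd: "smooth a \<Longrightarrow> smooth b \<Longrightarrow> smooth (tadd a b)"
  unfolding smooth_iff_lweight[of "tadd a b"]
proof (intro conjI allI impI)
  fix p assume a: "smooth a" and b: "smooth b"
  obtain A B where A: "\<And>m. lweight p m * cmod (a m) \<le> A" and B: "\<And>m. lweight p m * cmod (b m) \<le> B"
    using smooth_lweight_bounded[OF a] smooth_lweight_bounded[OF b] by metis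
  have "lweight p l * cmod (tadd a b l) \<le> A + B" for l
  proof -
    have "lweight p l * cmod (tadd a b l) \<le> lweight p l * (cmod (a l) + cmod (b l))"
      unfolding tadd_def by (intro mult_left_mono norm_triangle_ineq lweight_nonneg)
    thus ?thesis using A[of l] B[of l] by (simp add: distrib_left)
  qed
  thus "\<exists>C. \<forall>l. lweight p l * cmod (tadd a b l) \<le> C" by blast
qed (simp add: tadd_def smooth_vanishes)

lemma smooth_tscale: "smooth a \<Longrightarrow> smooth (tscale c a)"
  unfolding smooth_iff_lweight[of "tscale c a"]
proof (intro conjI allI impI)
  fix p assume a: "smooth a"
  obtain A where A: "\<And>m. lweight p m * cmod (a m) \<le> A" using smooth_lweight_bounded[OF a] by blast
  have "lweight p l * cmod (tscale c a l) \<le> cmod c * A" for l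
    using A[of l] by (simp add: tscale_def norm_mult mult.left_commute mult_left_mono)
  thus "\<exists>C. \<forall>l. lweight p l * cmod (tscale c a l) \<le> C" by blast
qed (simp add: tscale_def smooth_vanishes)

lemma smooth_tstar: "smooth a \<Longrightarrow> smooth (tstar \<theta> a)"
  unfolding smooth_iff_lweight[of "tstar \<theta> a"]
proof (intro conjI allI impI)
  fix p assume a: "smooth a"
  obtain A where A: "\<And>m. lweight p m * cmod (a m) \<le> A" using smooth_lweight_bounded[OF a] by blast
  have "lweight p l * cmod (tstar \<theta> a l) \<le> A" for l
    using A[of "lneg l"] by (simp add: tstar_def norm_mult)
  thus "\<exists>C. \<forall>l. lweight p l * cmod (tstar \<theta> a l) \<le> C" by blast
qed (simp add: tstar_def smooth_vanishes)

lemma smooth_tone: "smooth tone"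
  unfolding smooth_iff_lweight by (auto simp: tone_def intro!: exI[of _ 1])

section \<open>The twisted convolution algebra\<close>

definition twist_phase :: "(nat \<Rightarrow> nat \<Rightarrow> real) \<Rightarrow> lat \<Rightarrow> lat \<Rightarrow> real" where
  "twist_phase \<theta> l m = (\<Sum>j\<in>{1..4}. \<Sum>k\<in>{j<..4}. \<theta> k j * of_int (l k) * of_int (m j))"

lemma twist_eq_cis: "twist \<theta> l m = cis (2 * pi * twist_phase \<theta> l m)"
  unfolding twist_def twist_phase_def ..

lemma twist_phase_lsub1 [simp]: "twist_phase \<theta> (lsub x y) m = twist_phase \<theta> x m - twist_phase \<theta> y m"
  unfolding twist_phase_def lsub_def by (simp add: algebra_simps sum_subtractf)
lemma twist_phase_lsub2 [simp]: "twist_phase \<theta> m (lsub x y) = twist_phase \<theta> m x - twist_phase \<theta> m y"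
  unfolding twist_phase_def lsub_def by (simp add: algebra_simps sum_subtractf)
lemma twist_phase_ladd1 [simp]: "twist_phase \<theta> (ladd x y) m = twist_phase \<theta> x m + twist_phase \<theta> y m"
  unfolding twist_phase_def ladd_def by (simp add: algebra_simps sum.distrib)
lemma twist_phase_ladd2 [simp]: "twist_phase \<theta> m (ladd x y) = twist_phase \<theta> m x + twist_phase \<theta> m y"
  unfolding twist_phase_def ladd_def by (simp add: algebra_simps sum.distrib)
lemma twist_phase_lneg1 [simp]: "twist_phase \<theta> (lneg x) m = - twist_phase \<theta> x m"
  unfolding twist_phase_def lneg_def by (simp add: sum_negf)
lemma twist_phase_lneg2 [simp]: "twist_phase \<theta> m (lneg x) = - twist_phase \<theta> m x"
  unfolding twist_phase_def lneg_def by (simp add: sum_negf)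
lemma twist_phase_lzero1 [simp]: "twist_phase \<theta> lzero m = 0"
  unfolding twist_phase_def lzero_def by simp
lemma twist_phase_lzero2 [simp]: "twist_phase \<theta> m lzero = 0"
  unfolding twist_phase_def lzero_def by simp

lemma twist_lzero1 [simp]: "twist \<theta> lzero m = 1"
  by (simp add: twist_eq_cis)
lemma twist_lzero2 [simp]: "twist \<theta> m lzero = 1"
  by (simp add: twist_eq_cis)

lemma twist_lneg_commute: "twist \<theta> (lneg n) n = twist \<theta> n (lneg n)"
  by (simp add: twist_eq_cis)

lemma twist_mult_cnj [simp]: "twist \<theta> l m * cnj (twist \<theta> l m) = 1"
  by (simp add: twist_eq_cis cis_cnj cis_mult)

lemma twist_mult_twist_eqI:
  "twist_phase \<theta> a b + twist_phase \<theta> c d = twist_phase \<theta> e f + twist_phase \<theta> g h \<Longrightarrow>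
   twist \<theta> a b * twist \<theta> c d = twist \<theta> e f * twist \<theta> g h"
  unfolding twist_eq_cis cis_mult by (simp add: distrib_left[symmetric])

lemma tmult_tscale_left: "tmult \<theta> (tscale c a) b = tscale c (tmult \<theta> a b)"
  unfolding tmult_def tscale_def by (auto simp: fun_eq_iff mult.assoc infsum_cmult_right'[symmetric])

lemma tmult_tscale_right: "tmult \<theta> a (tscale c b) = tscale c (tmult \<theta> a b)"
  unfolding tmult_def tscale_def by (auto simp: fun_eq_iff infsum_cmult_right'[symmetric] mult_ac)

lemma tmult_tadd_left:
  assumes a: "smooth a" and b: "smooth b" and c: "smooth c"
  shows "tmult \<theta> (tadd a b) c = tadd (tmult \<theta> a c) (tmult \<theta> b c)"
proof
  fix n
  obtain C where C: "\<And>m. cmod (c m) \<le> C" using smooth_bounded[OF c] by blast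
  show "tmult \<theta> (tadd a b) c n = tadd (tmult \<theta> a c) (tmult \<theta> b c) n"
    using infsum_add[OF tmult_summand_summable[OF a C] tmult_summand_summable[OF b C]]
    by (cases "n \<in> lat4") (simp_all add: tmult_lat4 tmult_vanishes tadd_def algebra_simps)
qed

lemma tmult_tadd_right:
  assumes a: "smooth a" and b: "smooth b" and c: "smooth c"
  shows "tmult \<theta> a (tadd b c) = tadd (tmult \<theta> a b) (tmult \<theta> a c)"
proof
  fix n
  obtain B C where B: "\<And>m. cmod (b m) \<le> B" and C: "\<And>m. cmod (c m) \<le> C"
    using smooth_bounded[OF b] smooth_bounded[OF c] by metis
  show "tmult \<theta> a (tadd b c) n = tadd (tmult \<theta> a b) (tmult \<theta> a c) n"
    using infsum_add[OF tmult_summand_summable[OF a B] tmult_summand_summable[OF a C]]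
    by (cases "n \<in> lat4") (simp_all add: tmult_lat4 tmult_vanishes tadd_def algebra_simps)
qed

lemma infsum_singleton_support:
  assumes "x \<in> A" "\<And>y. y \<in> A \<Longrightarrow> y \<noteq> x \<Longrightarrow> f y = 0"
  shows "infsum f A = f x"
proof -
  have "infsum f A = infsum f {x}"
    by (rule infsum_cong_neutral) (use assms in auto)
  thus ?thesis by simp
qed

lemma tmult_tone_left: "smooth a \<Longrightarrow> tmult \<theta> tone a = a"
proof
  fix n assume "smooth a"
  show "tmult \<theta> tone a n = a n"
  proof (cases "n \<in> lat4")
    case True
    have "tmult \<theta> tone a n = tone lzero * a (lsub n lzero) * twist \<theta> lzero (lsub n lzero)"
      unfolding tmult_lat4[OF True] by (rule infsum_singleton_support) (auto simp: tone_def)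
    thus ?thesis by (simp add: tone_def)
  qed (simp add: tmult_vanishes smooth_vanishes \<open>smooth a\<close>)
qed

lemma tmult_tone_right: "smooth a \<Longrightarrow> tmult \<theta> a tone = a"
proof
  fix n assume "smooth a"
  show "tmult \<theta> a tone n = a n"
  proof (cases "n \<in> lat4")
    case True
    have "tmult \<theta> a tone n = a n * tone (lsub n n) * twist \<theta> n (lsub n n)"
      unfolding tmult_lat4[OF True]
      by (rule infsum_singleton_support) (auto simp: tone_def lsub_eq_lzero_iff True)
    thus ?thesis by (simp add: tone_def)
  qed (simp add: tmult_vanishes smooth_vanishes \<open>smooth a\<close>)
qed

definition triple_summand :: "(nat \<Rightarrow> nat \<Rightarrow> real) \<Rightarrow> nct \<Rightarrow> nct \<Rightarrow> nct \<Rightarrow> lat \<Rightarrow> lat \<times> lat \<Rightarrow> complex" where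
  "triple_summand \<theta> a b c n = (\<lambda>(l, k). a l * b k * c (lsub (lsub n l) k) *
      (twist \<theta> l k * twist \<theta> (ladd l k) (lsub (lsub n l) k)))"

lemma triple_summand_summable:
  assumes a: "smooth a" and b: "smooth b" and c: "smooth c"
  shows "triple_summand \<theta> a b c n summable_on lat4 \<times> lat4"
proof -
  obtain C where C: "\<And>m. cmod (c m) \<le> C" "0 \<le> C" using smooth_bounded[OF c] by blast
  have "(\<lambda>(l, k). cmod (a l) * (cmod (b k) * C)) summable_on lat4 \<times> lat4"
    by (rule summable_on_product_nonneg[OF smooth_abs_summable[OF a]
          summable_on_cmult_left[OF smooth_abs_summable[OF b]]]) (use C in auto)
  thus ?thesis
    by (rule summable_on_norm_dominated)
       (auto simp: triple_summand_def norm_mult mult.assoc intro!: mult_left_mono C)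
qed

lemma tmult_tmult_left_eq_infsum:
  assumes a: "smooth a" and b: "smooth b" and c: "smooth c" and n: "n \<in> lat4"
  shows "tmult \<theta> (tmult \<theta> a b) c n = infsum (triple_summand \<theta> a b c n) (lat4 \<times> lat4)"
proof -
  let ?T = "triple_summand \<theta> a b c n"
  define S where "S = (\<lambda>(m, l). a l * b (lsub m l) * twist \<theta> l (lsub m l) * (c (lsub n m) * twist \<theta> m (lsub n m)))"
  have bij: "bij_betw (\<lambda>(m, l). (l, lsub m l)) (lat4 \<times> lat4) (lat4 \<times> lat4)"
    by (rule bij_betw_byWitness[where f' = "\<lambda>(l, k). (ladd l k, l)"]) (auto simp: lsub_lat4 ladd_lat4)
  have TS: "?T \<circ> (\<lambda>(m, l). (l, lsub m l)) = S"
    by (auto simp: triple_summand_def S_def lsub_lsub_lsub mult_ac)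
  have S: "S summable_on lat4 \<times> lat4" "infsum S (lat4 \<times> lat4) = infsum ?T (lat4 \<times> lat4)"
    using triple_summand_summable[OF a b c]
      summable_on_reindex_bij_betw[OF bij, of ?T] infsum_reindex_bij_betw[OF bij, of ?T]
    by (simp_all add: TS[symmetric] o_def)
  have "tmult \<theta> (tmult \<theta> a b) c n = (\<Sum>\<^sub>\<infinity>m\<in>lat4. tmult \<theta> a b m * (c (lsub n m) * twist \<theta> m (lsub n m)))"
    using n by (simp add: tmult_lat4 mult.assoc)
  also have "\<dots> = (\<Sum>\<^sub>\<infinity>m\<in>lat4. \<Sum>\<^sub>\<infinity>l\<in>lat4. S (m, l))"
    by (rule infsum_cong) (simp add: tmult_lat4 S_def infsum_cmult_left')
  also have "\<dots> = infsum ?T (lat4 \<times> lat4)"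
    using infsum_Sigma'_banach[of "\<lambda>m l. S (m, l)" lat4 "\<lambda>_. lat4"] S by simp
  finally show ?thesis .
qed

lemma tmult_tmult_right_eq_infsum:
  assumes a: "smooth a" and b: "smooth b" and c: "smooth c" and n: "n \<in> lat4"
  shows "tmult \<theta> a (tmult \<theta> b c) n = infsum (triple_summand \<theta> a b c n) (lat4 \<times> lat4)"
proof -
  let ?T = "triple_summand \<theta> a b c n"
  have "tmult \<theta> a (tmult \<theta> b c) n = (\<Sum>\<^sub>\<infinity>l\<in>lat4. \<Sum>\<^sub>\<infinity>k\<in>lat4. ?T (l, k))"
  proof (subst tmult_lat4[OF n], rule infsum_cong)
    fix l assume l: "l \<in> lat4"
    have tw: "twist \<theta> k (lsub (lsub n l) k) * twist \<theta> l (lsub n l) =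
        twist \<theta> l k * twist \<theta> (ladd l k) (lsub (lsub n l) k)" for k
      by (rule twist_mult_twist_eqI) simp
    have "tmult \<theta> b c (lsub n l) = (\<Sum>\<^sub>\<infinity>k\<in>lat4. b k * c (lsub (lsub n l) k) * twist \<theta> k (lsub (lsub n l) k))"
      using n l by (simp add: tmult_lat4 lsub_lat4)
    hence "a l * tmult \<theta> b c (lsub n l) * twist \<theta> l (lsub n l) = (\<Sum>\<^sub>\<infinity>k\<in>lat4.
        a l * (b k * c (lsub (lsub n l) k)) * (twist \<theta> k (lsub (lsub n l) k) * twist \<theta> l (lsub n l)))"
      by (simp add: infsum_cmult_left'[symmetric] infsum_cmult_right'[symmetric] mult_ac)
    also have "\<dots> = (\<Sum>\<^sub>\<infinity>k\<in>lat4. ?T (l, k))"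
      unfolding tw by (simp add: triple_summand_def mult_ac)
    finally show "a l * tmult \<theta> b c (lsub n l) * twist \<theta> l (lsub n l) = (\<Sum>\<^sub>\<infinity>k\<in>lat4. ?T (l, k))" .
  qed
  also have "\<dots> = infsum ?T (lat4 \<times> lat4)"
    using infsum_Sigma'_banach[of "\<lambda>l k. ?T (l, k)" lat4 "\<lambda>_. lat4"] triple_summand_summable[OF a b c]
    by simp
  finally show ?thesis .
qed

lemma tmult_assoc:
  assumes "smooth a" "smooth b" "smooth c"
  shows "tmult \<theta> (tmult \<theta> a b) c = tmult \<theta> a (tmult \<theta> b c)"
proof
  fix n show "tmult \<theta> (tmult \<theta> a b) c n = tmult \<theta> a (tmult \<theta> b c) n"
    using tmult_tmult_left_eq_infsum[OF assms] tmult_tmult_right_eq_infsum[OF assms]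
    by (cases "n \<in> lat4") (simp_all add: tmult_vanishes)
qed

lemma tstar_tstar: "tstar \<theta> (tstar \<theta> a) = a"
proof
  fix n
  have "tstar \<theta> (tstar \<theta> a) n = a n * (twist \<theta> n (lneg n) * cnj (twist \<theta> n (lneg n)))"
    by (simp add: tstar_def twist_lneg_commute mult_ac)
  thus "tstar \<theta> (tstar \<theta> a) n = a n" by simp
qed

lemma tstar_tadd: "tstar \<theta> (tadd a b) = tadd (tstar \<theta> a) (tstar \<theta> b)"
  by (simp add: tstar_def tadd_def fun_eq_iff algebra_simps)

lemma tstar_tscale: "tstar \<theta> (tscale c a) = tscale (cnj c) (tstar \<theta> a)"
  by (simp add: tstar_def tscale_def fun_eq_iff algebra_simps)

lemma tstar_tone: "tstar \<theta> tone = tone"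
  by (rule ext) (auto simp: tstar_def tone_def)

lemma tstar_tmult_lat4:
  assumes n: "n \<in> lat4"
  shows "tstar \<theta> (tmult \<theta> a b) n = tmult \<theta> (tstar \<theta> b) (tstar \<theta> a) n"
proof -
  define g where "g l = cnj (a l) * cnj (b (lsub (lneg n) l)) *
      (cnj (twist \<theta> l (lsub (lneg n) l)) * cnj (twist \<theta> n (lneg n)))" for l
  have "tstar \<theta> (tmult \<theta> a b) n =
      cnj (\<Sum>\<^sub>\<infinity>l\<in>lat4. a l * b (lsub (lneg n) l) * twist \<theta> l (lsub (lneg n) l)) * cnj (twist \<theta> n (lneg n))"
    using n unfolding tstar_def by (simp add: tmult_lat4)
  also have "\<dots> = (\<Sum>\<^sub>\<infinity>l\<in>lat4. cnj (a l * b (lsub (lneg n) l) * twist \<theta> l (lsub (lneg n) l)) * cnj (twist \<theta> n (lneg n)))"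
    by (simp only: infsum_cnj infsum_cmult_left')
  also have "\<dots> = infsum g lat4"
    by (rule infsum_cong) (simp add: g_def mult_ac)
  also have "\<dots> = (\<Sum>\<^sub>\<infinity>m\<in>lat4. tstar \<theta> b m * tstar \<theta> a (lsub n m) * twist \<theta> m (lsub n m))"
  proof (rule infsum_reindex_bij_witness[of lat4 "\<lambda>m. lsub m n" "\<lambda>l. ladd l n"])
    fix l assume "l \<in> lat4"
    have "cnj (twist \<theta> l (lneg (ladd l n))) * cnj (twist \<theta> n (lneg n)) =
        cnj (twist \<theta> (ladd l n) (lneg (ladd l n))) * cnj (twist \<theta> (lsub n (ladd l n)) (lneg (lsub n (ladd l n)))) *
        twist \<theta> (ladd l n) (lsub n (ladd l n))"
      unfolding twist_eq_cis cis_cnj cis_mult by (rule arg_cong[where f = cis]) (simp add: algebra_simps)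
    thus "tstar \<theta> b (ladd l n) * tstar \<theta> a (lsub n (ladd l n)) * twist \<theta> (ladd l n) (lsub n (ladd l n)) = g l"
      by (simp add: g_def tstar_def lneg_lsub mult_ac)
  qed (use n in \<open>auto simp: lsub_lat4 ladd_lat4\<close>)
  also have "\<dots> = tmult \<theta> (tstar \<theta> b) (tstar \<theta> a) n"
    using n by (simp add: tmult_lat4)
  finally show ?thesis .
qed

lemma tstar_tmult: "tstar \<theta> (tmult \<theta> a b) = tmult \<theta> (tstar \<theta> b) (tstar \<theta> a)"
proof
  fix n show "tstar \<theta> (tmult \<theta> a b) n = tmult \<theta> (tstar \<theta> b) (tstar \<theta> a) n"
    using tstar_tmult_lat4[of n] by (cases "n \<in> lat4") (simp_all add: tmult_vanishes tstar_def)
qed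

lemma phi0_tstar: "phi0 (tstar \<theta> a) = cnj (phi0 a)"
  by (simp add: phi0_def tstar_def)

lemma phi0_tadd: "phi0 (tadd a b) = phi0 a + phi0 b"
  by (simp add: phi0_def tadd_def)

lemma phi0_tscale: "phi0 (tscale c a) = c * phi0 a"
  by (simp add: phi0_def tscale_def)

lemma phi0_tmult_commute: "phi0 (tmult \<theta> a b) = phi0 (tmult \<theta> b a)"
proof -
  have "phi0 (tmult \<theta> a b) = (\<Sum>\<^sub>\<infinity>l\<in>lat4. a l * b (lneg l) * twist \<theta> l (lneg l))"
    by (simp add: phi0_def tmult_lat4 lzero_lsub)
  also have "\<dots> = (\<Sum>\<^sub>\<infinity>l\<in>lat4. b l * a (lneg l) * twist \<theta> l (lneg l))"
    by (rule infsum_reindex_bij_witness[of lat4 lneg lneg]) (auto simp: twist_lneg_commute[symmetric] mult_ac)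
  also have "\<dots> = phi0 (tmult \<theta> b a)"
    by (simp add: phi0_def tmult_lat4 lzero_lsub)
  finally show ?thesis .
qed

section \<open>Derivations as Fourier multipliers\<close>

definition fmul :: "(lat \<Rightarrow> complex) \<Rightarrow> nct \<Rightarrow> nct" where
  "fmul c a = (\<lambda>l. c l * a l)"

text \<open>Multiplication by such a symbol is a derivation; \<open>c l = l j\<close> gives \<open>\<delta>\<^sub>j\<close>.\<close>

definition derivation_symbol :: "(lat \<Rightarrow> complex) \<Rightarrow> bool" where
  "derivation_symbol c \<longleftrightarrow>
     (\<forall>x y. c (lsub x y) = c x - c y) \<and> (\<forall>l. cmod (c l) \<le> real_of_int (lnorm l))"

lemma derivation_symbol_lzero: "derivation_symbol c \<Longrightarrow> c lzero = 0"
  unfolding derivation_symbol_def by (metis diff_self lsub_self)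

lemma derivation_symbol_lneg: "derivation_symbol c \<Longrightarrow> c (lneg n) = - c n"
  using derivation_symbol_lzero[of c] unfolding derivation_symbol_def by (metis diff_0 lzero_lsub)

lemma derivation_symbol_cnj: "derivation_symbol c \<Longrightarrow> derivation_symbol (\<lambda>l. cnj (c l))"
  unfolding derivation_symbol_def by simp

lemma derivation_symbol_coordinates:
  assumes "i \<in> {1..4}" "j \<in> {1..4}" "i \<noteq> j" "cmod s = 1"
  shows "derivation_symbol (\<lambda>l. of_int (l i) + s * of_int (l j))"
  unfolding derivation_symbol_def
proof (intro conjI allI)
  fix x y show "of_int (lsub x y i) + s * of_int (lsub x y j) =
      (of_int (x i) + s * of_int (x j)) - (of_int (y i) + s * of_int (y j))"
    by (simp add: lsub_def algebra_simps)
next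
  fix l :: lat
  have "(\<Sum>k\<in>{i, j}. \<bar>l k\<bar>) \<le> (\<Sum>k\<in>{1..4}. \<bar>l k\<bar>)"
    by (rule sum_mono2) (use assms in auto)
  hence "\<bar>l i\<bar> + \<bar>l j\<bar> \<le> lnorm l"
    using assms(3) by (simp add: lnorm_def)
  hence "\<bar>real_of_int (l i)\<bar> + \<bar>real_of_int (l j)\<bar> \<le> real_of_int (lnorm l)"
    by linarith
  moreover have "cmod (of_int (l i) + s * of_int (l j)) \<le> \<bar>real_of_int (l i)\<bar> + \<bar>real_of_int (l j)\<bar>"
    using norm_triangle_ineq[of "of_int (l i)" "s * of_int (l j)"] assms(4) by (simp add: norm_mult)
  ultimately show "cmod (of_int (l i) + s * of_int (l j)) \<le> real_of_int (lnorm l)"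
    by linarith
qed

lemma smooth_fmul:
  assumes c: "derivation_symbol c" and a: "smooth a"
  shows "smooth (fmul c a)"
  unfolding smooth_iff_lweight[of "fmul c a"]
proof (intro conjI allI impI)
  fix p
  obtain A where A: "\<And>m. lweight (p + 1) m * cmod (a m) \<le> A" using smooth_lweight_bounded[OF a] by blast
  have "lweight p l * cmod (fmul c a l) \<le> A" for l
  proof -
    have "cmod (c l) \<le> lweight 1 l"
      using c unfolding derivation_symbol_def lweight_def by (smt (verit) power_one_right)
    hence "lweight p l * cmod (fmul c a l) \<le> lweight p l * lweight 1 l * cmod (a l)"
      by (simp add: fmul_def norm_mult mult_right_mono mult_left_mono mult.assoc)
    thus ?thesis using A[of l] by (metis lweight_add order_trans)
  qed
  thus "\<exists>C. \<forall>l. lweight p l * cmod (fmul c a l) \<le> C" by blast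
qed (simp add: fmul_def smooth_vanishes a)

lemma phi0_fmul: "derivation_symbol c \<Longrightarrow> phi0 (fmul c a) = 0"
  by (simp add: phi0_def fmul_def derivation_symbol_lzero)

lemma fmul_tstar:
  "derivation_symbol c \<Longrightarrow> fmul c (tstar \<theta> a) = tscale (-1) (tstar \<theta> (fmul (\<lambda>l. cnj (c l)) a))"
  by (simp add: fmul_def tscale_def tstar_def fun_eq_iff derivation_symbol_lneg)

lemma fmul_tmult:
  assumes c: "derivation_symbol c" and a: "smooth a" and b: "smooth b"
  shows "fmul c (tmult \<theta> a b) = tadd (tmult \<theta> (fmul c a) b) (tmult \<theta> a (fmul c b))"
proof
  fix n
  obtain B B' where B: "\<And>m. cmod (b m) \<le> B" and B': "\<And>m. cmod (fmul c b m) \<le> B'"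
    using smooth_bounded[OF b] smooth_bounded[OF smooth_fmul[OF c b]] by metis
  have split: "c n = c l + c (lsub n l)" for l
    using c unfolding derivation_symbol_def by auto
  show "fmul c (tmult \<theta> a b) n = tadd (tmult \<theta> (fmul c a) b) (tmult \<theta> a (fmul c b)) n"
  proof (cases "n \<in> lat4")
    case n: True
    have "tadd (tmult \<theta> (fmul c a) b) (tmult \<theta> a (fmul c b)) n =
       (\<Sum>\<^sub>\<infinity>l\<in>lat4. fmul c a l * b (lsub n l) * twist \<theta> l (lsub n l) +
                   a l * fmul c b (lsub n l) * twist \<theta> l (lsub n l))"
      unfolding tadd_def tmult_lat4[OF n]
      by (rule infsum_add[symmetric, OF tmult_summand_summable[OF smooth_fmul[OF c a] B]
            tmult_summand_summable[OF a B']])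
    also have "\<dots> = (\<Sum>\<^sub>\<infinity>l\<in>lat4. c n * (a l * b (lsub n l) * twist \<theta> l (lsub n l)))"
    proof (rule infsum_cong)
      fix l show "fmul c a l * b (lsub n l) * twist \<theta> l (lsub n l) + a l * fmul c b (lsub n l) * twist \<theta> l (lsub n l) =
          c n * (a l * b (lsub n l) * twist \<theta> l (lsub n l))"
        by (simp add: split[of l] fmul_def algebra_simps)
    qed
    also have "\<dots> = fmul c (tmult \<theta> a b) n"
      by (simp add: infsum_cmult_right' fmul_def tmult_lat4[OF n])
    finally show ?thesis ..
  qed (simp add: tmult_vanishes fmul_def tadd_def)
qed

text \<open>Integration by parts: \<open>\<phi>\<^sub>0\<close> kills the derivation \<open>fmul c\<close>, so by the Leibniz rule it moves
  across a product with a sign, which cancels the sign from \<open>fmul_tstar\<close>.\<close>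

lemma phi0_fmul_adjoint:
  assumes c: "derivation_symbol c" and a: "smooth a" and b: "smooth b" and Y: "smooth Y"
  shows "phi0 (tmult \<theta> (tmult \<theta> (tstar \<theta> (fmul c a)) (fmul c b)) Y) =
         phi0 (tmult \<theta> (fmul c (tmult \<theta> Y (fmul (\<lambda>l. cnj (c l)) (tstar \<theta> a)))) b)"
proof -
  define Z where "Z = fmul (\<lambda>l. cnj (c l)) (tstar \<theta> a)"
  have Z: "smooth Z" unfolding Z_def by (intro smooth_fmul derivation_symbol_cnj c smooth_tstar a)
  have cb: "smooth (fmul c b)" by (rule smooth_fmul[OF c b])
  have YZ: "smooth (tmult \<theta> Y Z)" by (rule smooth_tmult[OF Y Z])
  have "tstar \<theta> (fmul c a) = tscale (-1) Z"
    using arg_cong[OF fmul_tstar[OF derivation_symbol_cnj[OF c], of \<theta> a], of "tscale (-1)"]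
    by (simp add: Z_def tscale_def)
  hence "phi0 (tmult \<theta> (tmult \<theta> (tstar \<theta> (fmul c a)) (fmul c b)) Y) =
      - phi0 (tmult \<theta> Y (tmult \<theta> Z (fmul c b)))"
    by (simp add: tmult_tscale_left phi0_tscale phi0_tmult_commute[of \<theta> _ Y])
  also have "\<dots> = - phi0 (tmult \<theta> (tmult \<theta> Y Z) (fmul c b))"
    by (simp add: tmult_assoc Y Z cb)
  also have "\<dots> = phi0 (tmult \<theta> (fmul c (tmult \<theta> Y Z)) b)"
    using phi0_fmul[OF c, of "tmult \<theta> (tmult \<theta> Y Z) b"]
    by (simp add: fmul_tmult[OF c YZ b] phi0_tadd add_eq_0_iff)
  finally show ?thesis by (simp add: Z_def)
qed

section \<open>Exponentials\<close>

lemma tscale_tscale: "tscale a (tscale b x) = tscale (a * b) x"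
  by (simp add: tscale_def fun_eq_iff)

lemma tscale_one [simp]: "tscale 1 x = x"
  by (simp add: tscale_def fun_eq_iff)

lemma tpow_tscale: "tpow \<theta> (tscale u h) k = tscale (u ^ k) (tpow \<theta> h k)"
  by (induction k) (simp_all add: tmult_tscale_left tmult_tscale_right tscale_tscale mult.commute)

lemma smooth_tpow: "smooth h \<Longrightarrow> smooth (tpow \<theta> h k)"
  by (induction k) (simp_all add: smooth_tone smooth_tmult)

lemma tpow_vanishes: "l \<notin> lat4 \<Longrightarrow> tpow \<theta> h k l = 0"
  by (cases k) (auto simp: tone_def tmult_vanishes)

lemma lweight_tpow_le:
  assumes h: "smooth h" shows "lweight p l * cmod (tpow \<theta> h k l) \<le> wnorm p h ^ k"
proof (induction k arbitrary: l)
  case 0 show ?case by (simp add: tone_def)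
next
  case (Suc k) show ?case using lweight_tmult_le[OF h Suc.IH] by simp
qed

lemma tpow_add: "smooth h \<Longrightarrow> tmult \<theta> (tpow \<theta> h p) (tpow \<theta> h q) = tpow \<theta> h (p + q)"
  by (induction p) (simp_all add: tmult_tone_left tmult_assoc smooth_tpow)

lemma tstar_tpow: "smooth h \<Longrightarrow> tstar \<theta> (tpow \<theta> h k) = tpow \<theta> (tstar \<theta> h) k"
proof (induction k)
  case 0 thus ?case by (simp add: tstar_tone)
next
  case (Suc k)
  have "tmult \<theta> (tpow \<theta> (tstar \<theta> h) k) (tstar \<theta> h) = tpow \<theta> (tstar \<theta> h) (Suc k)"
    using tpow_add[OF smooth_tstar[OF Suc.prems], where p = k and q = 1]
    by (simp add: tmult_tone_right smooth_tstar Suc.prems)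
  thus ?case using Suc by (simp add: tstar_tmult)
qed

definition texp_term :: "(nat \<Rightarrow> nat \<Rightarrow> real) \<Rightarrow> nct \<Rightarrow> complex \<Rightarrow> lat \<Rightarrow> nat \<Rightarrow> complex" where
  "texp_term \<theta> h u l k = u ^ k * tpow \<theta> h k l / of_nat (fact k)"

lemma lweight_texp_term_le:
  assumes "smooth h"
  shows "lweight p l * cmod (texp_term \<theta> h u l k) \<le> (cmod u * wnorm p h) ^ k / fact k"
proof -
  have "lweight p l * cmod (texp_term \<theta> h u l k) = cmod u ^ k * (lweight p l * cmod (tpow \<theta> h k l)) / fact k"
    by (simp add: texp_term_def norm_mult norm_divide norm_power mult_ac)
  also have "\<dots> \<le> cmod u ^ k * wnorm p h ^ k / fact k"
    by (intro divide_right_mono mult_left_mono lweight_tpow_le assms) auto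
  finally show ?thesis by (simp add: power_mult_distrib)
qed

lemma summable_exp_real: "summable (\<lambda>n. (x::real) ^ n / fact n)"
  using exp_converges[of x] by (simp add: sums_iff divide_inverse mult.commute scaleR_conv_of_real)

lemma summable_on_exp_real: "0 \<le> x \<Longrightarrow> (\<lambda>n. (x::real) ^ n / fact n) summable_on UNIV"
  using summable_exp_real[of x] by (subst summable_on_UNIV_nonneg_real_iff) auto

lemma summable_norm_texp_term:
  "smooth h \<Longrightarrow> summable (\<lambda>k. cmod (texp_term \<theta> h u l k))"
  using lweight_texp_term_le[of h 0]
  by (intro summable_comparison_test'[OF summable_exp_real[of "cmod u * wnorm 0 h"]]) simp

lemma texp_tscale_eq_suminf: "texp \<theta> (tscale u h) l = (\<Sum>k. texp_term \<theta> h u l k)"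
  unfolding texp_def texp_term_def tpow_tscale by (simp add: tscale_def)

lemma texp_tscale_has_sum:
  "smooth h \<Longrightarrow> (texp_term \<theta> h u l has_sum texp \<theta> (tscale u h) l) UNIV"
  unfolding texp_tscale_eq_suminf
  using norm_summable_imp_has_sum summable_norm_texp_term summable_norm_cancel summable_sums by blast

lemma smooth_texp_tscale:
  assumes h: "smooth h" shows "smooth (texp \<theta> (tscale u h))"
  unfolding smooth_iff_lweight
proof (intro conjI allI impI)
  fix l assume "l \<notin> lat4" thus "texp \<theta> (tscale u h) l = 0"
    by (simp add: texp_tscale_eq_suminf texp_term_def tpow_vanishes)
next
  fix p
  have "lweight p l * cmod (texp \<theta> (tscale u h) l) \<le> (\<Sum>k. (cmod u * wnorm p h) ^ k / fact k)" for l
  proof -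
    have s: "summable (\<lambda>k. cmod (texp_term \<theta> h u l k))" by (rule summable_norm_texp_term[OF h])
    have "lweight p l * cmod (texp \<theta> (tscale u h) l) \<le> lweight p l * (\<Sum>k. cmod (texp_term \<theta> h u l k))"
      unfolding texp_tscale_eq_suminf by (intro mult_left_mono summable_norm s) simp
    also have "\<dots> = (\<Sum>k. lweight p l * cmod (texp_term \<theta> h u l k))"
      by (rule suminf_mult[OF s, symmetric])
    also have "\<dots> \<le> (\<Sum>k. (cmod u * wnorm p h) ^ k / fact k)"
      by (intro suminf_le summable_mult s summable_exp_real lweight_texp_term_le h)
    finally show ?thesis .
  qed
  thus "\<exists>C. \<forall>l. lweight p l * cmod (texp \<theta> (tscale u h) l) \<le> C" by blast
qed

lemma smooth_texp: "smooth h \<Longrightarrow> smooth (texp \<theta> h)"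
  using smooth_texp_tscale[of h \<theta> 1] by simp

lemma tstar_texp:
  assumes h: "smooth h" shows "tstar \<theta> (texp \<theta> h) = texp \<theta> (tstar \<theta> h)"
proof
  fix n
  have "(\<lambda>k. cnj (texp_term \<theta> h 1 (lneg n) k) * cnj (twist \<theta> n (lneg n))) sums
      (cnj (texp \<theta> h (lneg n)) * cnj (twist \<theta> n (lneg n)))"
    using texp_tscale_has_sum[OF h, of \<theta> 1 "lneg n"]
    by (intro sums_mult2 sums_cnj[THEN iffD2]) (simp add: has_sum_imp_sums)
  moreover have "cnj (texp_term \<theta> h 1 (lneg n) k) * cnj (twist \<theta> n (lneg n)) =
      tpow \<theta> (tstar \<theta> h) k n / of_nat (fact k)" for k
    unfolding tstar_tpow[OF h, symmetric] by (simp add: texp_term_def tstar_def)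
  ultimately show "tstar \<theta> (texp \<theta> h) n = texp \<theta> (tstar \<theta> h) n"
    by (simp add: tstar_def texp_def sums_iff)
qed

lemma texp_tscale_0: "texp \<theta> (tscale 0 h) = tone"
proof
  fix l
  have "(\<lambda>k. texp_term \<theta> h 0 l k) = (\<lambda>k. if k = 0 then tone l else 0)"
    by (auto simp: fun_eq_iff texp_term_def)
  moreover have "(\<lambda>k::nat. if k = 0 then tone l else 0) sums tone l"
    using sums_single[of 0 "\<lambda>_. tone l"] by simp
  ultimately show "texp \<theta> (tscale 0 h) l = tone l"
    by (simp add: texp_tscale_eq_suminf sums_iff)
qed

lemma infsum_mult_infsum:
  fixes f :: "'a \<Rightarrow> complex" and g :: "'b \<Rightarrow> complex"
  assumes f: "f summable_on A" and g: "g summable_on B"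
  shows "(\<lambda>(x, y). f x * g y) summable_on A \<times> B"
    and "infsum f A * infsum g B = infsum (\<lambda>(x, y). f x * g y) (A \<times> B)"
proof -
  have "(\<lambda>(x, y). cmod (f x) * cmod (g y)) summable_on A \<times> B"
    using f g by (intro summable_on_product_nonneg) (auto simp: summable_on_iff_abs_summable_on_complex)
  thus S: "(\<lambda>(x, y). f x * g y) summable_on A \<times> B"
    by (rule summable_on_norm_dominated) (auto simp: norm_mult)
  have "infsum (\<lambda>(x, y). f x * g y) (A \<times> B) = (\<Sum>\<^sub>\<infinity>x\<in>A. \<Sum>\<^sub>\<infinity>y\<in>B. f x * g y)"
    using infsum_Sigma'_banach[of "\<lambda>x y. f x * g y" A "\<lambda>_. B"] S by simp
  also have "\<dots> = infsum f A * infsum g B"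
    by (simp add: infsum_cmult_right' infsum_cmult_left')
  finally show "infsum f A * infsum g B = infsum (\<lambda>(x, y). f x * g y) (A \<times> B)" ..
qed

lemma infsum_antidiagonal:
  fixes G :: "nat \<times> nat \<Rightarrow> 'a::banach"
  assumes G: "G summable_on UNIV"
  shows "infsum G UNIV = (\<Sum>\<^sub>\<infinity>N. \<Sum>p\<le>N. G (p, N - p))"
proof -
  let ?D = "SIGMA N:UNIV. {..N::nat}"
  have bij: "bij_betw (\<lambda>(N, p). (p, N - p)) ?D UNIV"
    by (rule bij_betw_byWitness[where f' = "\<lambda>(p::nat, q::nat). (p + q, p)"]) auto
  have "(\<lambda>x. G (case x of (N, p) \<Rightarrow> (p, N - p))) summable_on ?D"
    using summable_on_reindex_bij_betw[OF bij] G by blast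
  hence "(\<lambda>(N, p). G (p, N - p)) summable_on ?D"
    by (simp add: case_prod_unfold)
  moreover have "infsum G UNIV = infsum (\<lambda>(N, p). G (p, N - p)) ?D"
    using infsum_reindex_bij_betw[OF bij, of G] by (simp add: case_prod_unfold)
  ultimately show ?thesis
    using infsum_Sigma'_banach[of "\<lambda>N p. G (p, N - p)" UNIV "\<lambda>N. {..N}"] by simp
qed

lemma binomial_fact_sum:
  fixes s t :: complex
  shows "(\<Sum>p\<le>N. s ^ p * t ^ (N - p) / (fact p * fact (N - p))) = (s + t) ^ N / fact N"
proof -
  have "(s + t) ^ N / fact N = (\<Sum>k\<le>N. of_nat (N choose k) * s ^ k * t ^ (N - k) / fact N)"
    by (simp add: binomial_ring sum_divide_distrib)
  also have "\<dots> = (\<Sum>k\<le>N. s ^ k * t ^ (N - k) / (fact k * fact (N - k)))"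
    by (rule sum.cong) (simp_all add: binomial_fact field_simps)
  finally show ?thesis ..
qed

lemma summable_tmult_texp_terms:
  assumes h: "smooth h"
  shows "(\<lambda>(l, p, q). texp_term \<theta> h s l p * texp_term \<theta> h t (lsub n l) q * twist \<theta> l (lsub n l))
           summable_on lat4 \<times> UNIV"
proof -
  define \<alpha> where "\<alpha> u M k = (cmod u * M) ^ k / fact k" for u :: complex and M :: real and k :: nat
  have \<alpha>: "0 \<le> \<alpha> u (wnorm p h) k" "\<alpha> u (wnorm p h) summable_on UNIV" for u p k
    unfolding \<alpha>_def[abs_def] by (simp_all add: wnorm_nonneg summable_on_exp_real)
  have "(\<lambda>(p, q). \<alpha> s (wnorm 8 h) p * \<alpha> t (wnorm 0 h) q) summable_on UNIV \<times> UNIV"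
    by (rule summable_on_product_nonneg) (simp_all add: \<alpha>)
  hence "(\<lambda>(l, pq). 1 / lweight 8 l * (case pq of (p, q) \<Rightarrow> \<alpha> s (wnorm 8 h) p * \<alpha> t (wnorm 0 h) q))
      summable_on lat4 \<times> UNIV"
    by (intro summable_on_product_nonneg[OF summable_on_inverse_lweight]) (auto simp: \<alpha>)
  thus ?thesis
  proof (rule summable_on_norm_dominated)
    fix x :: "lat \<times> nat \<times> nat"
    obtain l p q where x: "x = (l, p, q)" by (metis prod.exhaust)
    have "cmod (texp_term \<theta> h s l p) \<le> 1 / lweight 8 l * \<alpha> s (wnorm 8 h) p"
      using lweight_texp_term_le[OF h, of 8 l \<theta> s p] lweight_pos[of 8 l]
      by (simp add: \<alpha>_def field_simps)
    moreover have "cmod (texp_term \<theta> h t (lsub n l) q) \<le> \<alpha> t (wnorm 0 h) q"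
      using lweight_texp_term_le[OF h, of 0 _ \<theta> t q] by (simp add: \<alpha>_def)
    ultimately have "cmod (texp_term \<theta> h s l p) * cmod (texp_term \<theta> h t (lsub n l) q)
        \<le> 1 / lweight 8 l * \<alpha> s (wnorm 8 h) p * \<alpha> t (wnorm 0 h) q"
      by (intro mult_mono) (auto simp: \<alpha>)
    thus "norm ((\<lambda>(l, p, q). texp_term \<theta> h s l p * texp_term \<theta> h t (lsub n l) q * twist \<theta> l (lsub n l)) x)
        \<le> (\<lambda>(l, pq). 1 / lweight 8 l * (case pq of (p, q) \<Rightarrow> \<alpha> s (wnorm 8 h) p * \<alpha> t (wnorm 0 h) q)) x"
      by (simp add: x norm_mult mult_ac)
  qed
qed

lemma summable_exp_pair_coeffs:
  assumes h: "smooth h"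
  shows "(\<lambda>(p, q). s ^ p * t ^ q / (fact p * fact q) * tpow \<theta> h (p + q) n) summable_on UNIV"
proof -
  define M where "M = wnorm 0 h"
  have "(\<lambda>(p, q). (cmod s * M) ^ p / fact p * ((cmod t * M) ^ q / fact q)) summable_on UNIV \<times> UNIV"
    by (rule summable_on_product_nonneg) (simp_all add: M_def wnorm_nonneg summable_on_exp_real)
  hence "(\<lambda>(p, q). (cmod s * M) ^ p / fact p * ((cmod t * M) ^ q / fact q)) summable_on UNIV"
    by simp
  thus ?thesis
  proof (rule summable_on_norm_dominated, clarify)
    fix p q
    have "cmod (tpow \<theta> h (p + q) n) \<le> M ^ (p + q)"
      using lweight_tpow_le[OF h, of 0 n \<theta> "p + q"] by (simp add: M_def)
    hence "cmod s ^ p / fact p * (cmod t ^ q / fact q) * cmod (tpow \<theta> h (p + q) n)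
        \<le> cmod s ^ p / fact p * (cmod t ^ q / fact q) * M ^ (p + q)"
      by (intro mult_left_mono) auto
    thus "norm (s ^ p * t ^ q / (fact p * fact q) * tpow \<theta> h (p + q) n)
        \<le> (cmod s * M) ^ p / fact p * ((cmod t * M) ^ q / fact q)"
      by (simp add: norm_mult norm_divide norm_power power_mult_distrib power_add mult_ac)
  qed
qed

lemma tmult_texp_tscale_eq_infsum:
  assumes h: "smooth h" and n: "n \<in> lat4"
  shows "tmult \<theta> (texp \<theta> (tscale s h)) (texp \<theta> (tscale t h)) n =
    (\<Sum>\<^sub>\<infinity>(p, q). s ^ p * t ^ q / (fact p * fact q) * tpow \<theta> h (p + q) n)"
proof -
  let ?A = "texp_term \<theta> h"
  define F where "F l pq = ?A s l (fst pq) * ?A t (lsub n l) (snd pq) * twist \<theta> l (lsub n l)"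
    for l and pq :: "nat \<times> nat"
  have A: "?A u l summable_on UNIV" "infsum (?A u l) UNIV = texp \<theta> (tscale u h) l" for u l
    using texp_tscale_has_sum[OF h] by (auto simp: has_sum_iff)
  have "tmult \<theta> (texp \<theta> (tscale s h)) (texp \<theta> (tscale t h)) n = (\<Sum>\<^sub>\<infinity>l\<in>lat4. \<Sum>\<^sub>\<infinity>pq. F l pq)"
  proof (subst tmult_lat4[OF n], rule infsum_cong)
    fix l
    show "texp \<theta> (tscale s h) l * texp \<theta> (tscale t h) (lsub n l) * twist \<theta> l (lsub n l) = (\<Sum>\<^sub>\<infinity>pq. F l pq)"
      unfolding A(2)[symmetric] infsum_mult_infsum(2)[OF A(1) A(1)]
      by (simp add: infsum_cmult_left'[symmetric] F_def case_prod_unfold)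
  qed
  also have "\<dots> = (\<Sum>\<^sub>\<infinity>pq. \<Sum>\<^sub>\<infinity>l\<in>lat4. F l pq)"
    using summable_tmult_texp_terms[OF h, of \<theta> s t n]
    by (intro infsum_swap_banach) (simp add: F_def case_prod_unfold)
  also have "\<dots> = (\<Sum>\<^sub>\<infinity>(p, q). s ^ p * t ^ q / (fact p * fact q) * tpow \<theta> h (p + q) n)"
  proof (rule infsum_cong, clarify)
    fix p q
    have "(\<Sum>\<^sub>\<infinity>l\<in>lat4. F l (p, q)) = s ^ p * t ^ q / (fact p * fact q) *
        (\<Sum>\<^sub>\<infinity>l\<in>lat4. tpow \<theta> h p l * tpow \<theta> h q (lsub n l) * twist \<theta> l (lsub n l))"
      by (simp add: infsum_cmult_right'[symmetric] F_def texp_term_def field_simps)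
    thus "(\<Sum>\<^sub>\<infinity>l\<in>lat4. F l (p, q)) = s ^ p * t ^ q / (fact p * fact q) * tpow \<theta> h (p + q) n"
      by (simp add: tmult_lat4[OF n, symmetric] tpow_add[OF h])
  qed
  finally show ?thesis .
qed

lemma texp_tscale_eq_infsum:
  assumes h: "smooth h"
  shows "texp \<theta> (tscale (s + t) h) n =
    (\<Sum>\<^sub>\<infinity>(p, q). s ^ p * t ^ q / (fact p * fact q) * tpow \<theta> h (p + q) n)"
proof -
  have "(\<Sum>\<^sub>\<infinity>(p, q). s ^ p * t ^ q / (fact p * fact q) * tpow \<theta> h (p + q) n) =
      (\<Sum>\<^sub>\<infinity>N. \<Sum>p\<le>N. s ^ p * t ^ (N - p) / (fact p * fact (N - p)) * tpow \<theta> h N n)"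
    using infsum_antidiagonal[OF summable_exp_pair_coeffs[OF h]] by simp
  also have "\<dots> = (\<Sum>\<^sub>\<infinity>N. texp_term \<theta> h (s + t) n N)"
  proof (rule infsum_cong)
    fix N
    have "(\<Sum>p\<le>N. s ^ p * t ^ (N - p) / (fact p * fact (N - p)) * tpow \<theta> h N n) =
        (\<Sum>p\<le>N. s ^ p * t ^ (N - p) / (fact p * fact (N - p))) * tpow \<theta> h N n"
      by (rule sum_distrib_right[symmetric])
    thus "(\<Sum>p\<le>N. s ^ p * t ^ (N - p) / (fact p * fact (N - p)) * tpow \<theta> h N n) = texp_term \<theta> h (s + t) n N"
      by (simp add: binomial_fact_sum texp_term_def)
  qed
  also have "\<dots> = texp \<theta> (tscale (s + t) h) n"
    using texp_tscale_has_sum[OF h] by (simp add: infsumI)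
  finally show ?thesis ..
qed

lemma tmult_texp_tscale:
  assumes "smooth h"
  shows "tmult \<theta> (texp \<theta> (tscale s h)) (texp \<theta> (tscale t h)) = texp \<theta> (tscale (s + t) h)"
proof
  fix n show "tmult \<theta> (texp \<theta> (tscale s h)) (texp \<theta> (tscale t h)) n = texp \<theta> (tscale (s + t) h) n"
  proof (cases "n \<in> lat4")
    case True thus ?thesis
      by (simp only: tmult_texp_tscale_eq_infsum[OF assms] texp_tscale_eq_infsum[OF assms])
  qed (simp add: tmult_vanishes smooth_vanishes[OF smooth_texp_tscale[OF assms]])
qed

lemma texp_tscale_self_adjoint:
  assumes "smooth h" "tstar \<theta> h = h" "cnj c = c"
  shows "tstar \<theta> (texp \<theta> (tscale c h)) = texp \<theta> (tscale c h)"
  using assms by (simp add: tstar_texp smooth_tscale tstar_tscale)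

section \<open>The anti-unitary equivalence\<close>

definition sym_d1 :: "lat \<Rightarrow> complex" where "sym_d1 l = of_int (l 1) + (- \<i>) * of_int (l 3)"
definition sym_d2 :: "lat \<Rightarrow> complex" where "sym_d2 l = of_int (l 2) + (- \<i>) * of_int (l 4)"
definition sym_dbar1 :: "lat \<Rightarrow> complex" where "sym_dbar1 l = of_int (l 1) + \<i> * of_int (l 3)"
definition sym_dbar2 :: "lat \<Rightarrow> complex" where "sym_dbar2 l = of_int (l 2) + \<i> * of_int (l 4)"

lemma derivation_symbols:
  "derivation_symbol sym_d1" "derivation_symbol sym_d2"
  "derivation_symbol sym_dbar1" "derivation_symbol sym_dbar2"
  unfolding sym_d1_def sym_d2_def sym_dbar1_def sym_dbar2_def
  by (rule derivation_symbol_coordinates; simp)+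

lemma fmul_symbols: "dd1 = fmul sym_d1" "dd2 = fmul sym_d2" "dbar1 = fmul sym_dbar1" "dbar2 = fmul sym_dbar2"
  by (simp_all add: fun_eq_iff dd1_def dd2_def dbar1_def dbar2_def fmul_def delta_def
      sym_d1_def sym_d2_def sym_dbar1_def sym_dbar2_def algebra_simps)

lemma cnj_symbols:
  "(\<lambda>l. cnj (sym_d1 l)) = sym_dbar1" "(\<lambda>l. cnj (sym_d2 l)) = sym_dbar2"
  "(\<lambda>l. cnj (sym_dbar1 l)) = sym_d1" "(\<lambda>l. cnj (sym_dbar2 l)) = sym_d2"
  by (simp_all add: fun_eq_iff sym_d1_def sym_d2_def sym_dbar1_def sym_dbar2_def)

text \<open>The star makes \<open>antiu\<close> antilinear; the factor \<open>e^-h\<close> turns the weight \<open>e^-2h\<close> of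
  \<open>H_\<phi>\<close> into the trivial weight of \<open>H_0\<close>.\<close>

definition antiu :: "(nat \<Rightarrow> nat \<Rightarrow> real) \<Rightarrow> nct \<Rightarrow> nct \<Rightarrow> nct" where
  "antiu \<theta> h a = tmult \<theta> (texp \<theta> (tscale (-1) h)) (tstar \<theta> a)"

lemma smooth_antiu: "smooth h \<Longrightarrow> smooth a \<Longrightarrow> smooth (antiu \<theta> h a)"
  unfolding antiu_def by (intro smooth_tmult smooth_texp_tscale smooth_tstar)

lemma tmult_texp_antiu:
  assumes h: "smooth h" and a: "smooth a"
  shows "tmult \<theta> (texp \<theta> h) (antiu \<theta> h a) = tstar \<theta> a"
  using tmult_texp_tscale[OF h, of \<theta> 1 "-1"]
  by (simp add: antiu_def tmult_assoc[symmetric] smooth_texp_tscale smooth_texp smooth_tstar h a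
      texp_tscale_0 tmult_tone_left)

lemma bij_betw_antiu:
  assumes h: "smooth h" shows "bij_betw (antiu \<theta> h) Csm Csm"
proof (rule bij_betw_byWitness[where f' = "\<lambda>c. tstar \<theta> (tmult \<theta> (texp \<theta> h) c)"])
  show "\<forall>a\<in>Csm. tstar \<theta> (tmult \<theta> (texp \<theta> h) (antiu \<theta> h a)) = a"
    by (simp add: Csm_def tmult_texp_antiu h tstar_tstar)
  show "\<forall>c\<in>Csm. antiu \<theta> h (tstar \<theta> (tmult \<theta> (texp \<theta> h) c)) = c"
    using tmult_texp_tscale[OF h, of \<theta> "-1" 1]
    by (simp add: Csm_def antiu_def tstar_tstar tmult_assoc[symmetric] smooth_texp_tscale smooth_texp h
        texp_tscale_0 tmult_tone_left)
qed (auto simp: Csm_def smooth_antiu smooth_tstar smooth_tmult smooth_texp h)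

lemma antiu_tadd: "smooth h \<Longrightarrow> smooth a \<Longrightarrow> smooth b \<Longrightarrow> antiu \<theta> h (tadd a b) = tadd (antiu \<theta> h a) (antiu \<theta> h b)"
  by (simp add: antiu_def tstar_tadd tmult_tadd_right smooth_texp_tscale smooth_tstar)

lemma antiu_tscale: "antiu \<theta> h (tscale c a) = tscale (cnj c) (antiu \<theta> h a)"
  by (simp add: antiu_def tstar_tscale tmult_tscale_right)

lemma inner0_antiu:
  assumes h: "smooth h" "tstar \<theta> h = h" and a: "smooth a" and b: "smooth b"
  shows "inner0 \<theta> (antiu \<theta> h a) (antiu \<theta> h b) = cnj (inner_phi \<theta> h a b)"
proof -
  let ?E = "\<lambda>s. texp \<theta> (tscale s h)"
  have E: "smooth (?E s)" "tstar \<theta> (?E (- of_nat k)) = ?E (- of_nat k)" for s k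
    using smooth_texp_tscale[OF h(1)] texp_tscale_self_adjoint[OF h] by simp_all
  have as: "smooth (tstar \<theta> a)" and bs: "smooth (tstar \<theta> b)" using a b by (simp_all add: smooth_tstar)
  have "inner0 \<theta> (antiu \<theta> h a) (antiu \<theta> h b) = phi0 (tmult \<theta> b (tmult \<theta> (tmult \<theta> (?E (-1)) (?E (-1))) (tstar \<theta> a)))"
    using E(2)[of 1] unfolding inner0_def antiu_def
    by (simp add: tstar_tmult tstar_tstar tmult_assoc smooth_tmult E(1) b as)
  also have "\<dots> = phi0 (tmult \<theta> (?E (-2)) (tmult \<theta> (tstar \<theta> a) b))"
    using tmult_texp_tscale[OF h(1), of \<theta> "-1" "-1"]
    by (simp add: phi0_tmult_commute[of \<theta> b] tmult_assoc E b as)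
  also have "\<dots> = cnj (inner_phi \<theta> h a b)"
    using E(2)[of 2] unfolding inner_phi_def phi0_tstar[of \<theta>, symmetric]
    by (simp add: tstar_tmult tstar_tstar)
  finally show ?thesis .
qed

definition dstar_d_term :: "(nat \<Rightarrow> nat \<Rightarrow> real) \<Rightarrow> nct \<Rightarrow> (lat \<Rightarrow> complex) \<Rightarrow> nct \<Rightarrow> nct" where
  "dstar_d_term \<theta> h c a =
     fmul (\<lambda>l. cnj (c l)) (tmult \<theta> (texp \<theta> (tscale (-1) h)) (fmul c (tstar \<theta> a)))"

definition dstar_d_core :: "(nat \<Rightarrow> nat \<Rightarrow> real) \<Rightarrow> nct \<Rightarrow> nct \<Rightarrow> nct" where
  "dstar_d_core \<theta> h a =
     tadd (tadd (dstar_d_term \<theta> h sym_d1 a) (dstar_d_term \<theta> h sym_dbar1 a))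
          (tadd (dstar_d_term \<theta> h sym_d2 a) (dstar_d_term \<theta> h sym_dbar2 a))"

text \<open>The factor \<open>e^2h\<close> compensates the weight \<open>e^-2h\<close> in the inner product of \<open>H_\<phi>\<close>.\<close>

definition dstar_d :: "(nat \<Rightarrow> nat \<Rightarrow> real) \<Rightarrow> nct \<Rightarrow> nct \<Rightarrow> nct" where
  "dstar_d \<theta> h a = tstar \<theta> (tmult \<theta> (texp \<theta> (tscale 2 h)) (dstar_d_core \<theta> h a))"

lemma smooth_dstar_d_term:
  "derivation_symbol c \<Longrightarrow> smooth h \<Longrightarrow> smooth a \<Longrightarrow> smooth (dstar_d_term \<theta> h c a)"
  unfolding dstar_d_term_def
  by (intro smooth_fmul derivation_symbol_cnj smooth_tmult smooth_texp_tscale smooth_tstar)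

lemma smooth_dstar_d_core: "smooth h \<Longrightarrow> smooth a \<Longrightarrow> smooth (dstar_d_core \<theta> h a)"
  unfolding dstar_d_core_def by (intro smooth_tadd smooth_dstar_d_term derivation_symbols)

lemma smooth_dstar_d: "smooth h \<Longrightarrow> smooth a \<Longrightarrow> smooth (dstar_d \<theta> h a)"
  unfolding dstar_d_def by (intro smooth_tstar smooth_tmult smooth_texp_tscale smooth_dstar_d_core)

lemma antiu_dstar_d:
  assumes h: "smooth h" and a: "smooth a"
  shows "antiu \<theta> h (dstar_d \<theta> h a) = Sop \<theta> h (antiu \<theta> h a)"
proof -
  have X: "smooth (dstar_d_core \<theta> h a)" by (rule smooth_dstar_d_core[OF h a])
  have "antiu \<theta> h (dstar_d \<theta> h a) = tmult \<theta> (texp \<theta> h) (dstar_d_core \<theta> h a)"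
    using tmult_texp_tscale[OF h, of \<theta> "-1" 2]
    by (simp add: antiu_def dstar_d_def tstar_tstar tmult_assoc[symmetric] smooth_texp_tscale h X)
  also have "\<dots> = Sop \<theta> h (antiu \<theta> h a)"
    unfolding Sop_def Let_def tmult_texp_antiu[OF h a] dstar_d_core_def dstar_d_term_def
    by (simp add: fmul_symbols cnj_symbols tmult_tadd_right smooth_texp h smooth_tadd
        smooth_fmul smooth_tmult smooth_texp_tscale smooth_tstar derivation_symbols a)
  finally show ?thesis .
qed

lemma inner1_fmul:
  assumes c: "derivation_symbol c" and h: "smooth h" and a: "smooth a" and b: "smooth b"
  shows "inner1 \<theta> h (fmul c b) (fmul c a) = phi0 (tmult \<theta> (dstar_d_term \<theta> h (\<lambda>l. cnj (c l)) a) b)"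
  unfolding inner1_def dstar_d_term_def
  by (simp add: phi0_fmul_adjoint[OF c a b smooth_texp_tscale[OF h]])

lemma innerK4_dop:
  assumes h: "smooth h" and a: "smooth a" and b: "smooth b"
  shows "innerK4 \<theta> h (dop b) (dop a) = inner_phi \<theta> h b (dstar_d \<theta> h a)"
proof -
  let ?X = "dstar_d_core \<theta> h a"
  have X: "smooth ?X" by (rule smooth_dstar_d_core[OF h a])
  have "innerK4 \<theta> h (dop b) (dop a) = phi0 (tmult \<theta> ?X b)"
    by (simp add: innerK4_def dop_def numeral_eq_Suc lessThan_Suc fmul_symbols inner1_fmul
        derivation_symbols cnj_symbols h a b dstar_d_core_def tmult_tadd_left smooth_tadd
        smooth_dstar_d_term phi0_tadd add_ac)
  also have "\<dots> = phi0 (tmult \<theta> (texp \<theta> (tscale (-2) h)) (tmult \<theta> (tmult \<theta> (texp \<theta> (tscale 2 h)) ?X) b))"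
    using tmult_texp_tscale[OF h, of \<theta> "-2" 2]
    by (simp add: tmult_assoc[symmetric] smooth_texp_tscale smooth_tmult h X b texp_tscale_0 tmult_tone_left)
  also have "\<dots> = phi0 (tmult \<theta> (tmult \<theta> (tmult \<theta> (texp \<theta> (tscale 2 h)) ?X) b) (texp \<theta> (tscale (-2) h)))"
    by (rule phi0_tmult_commute)
  also have "\<dots> = inner_phi \<theta> h b (dstar_d \<theta> h a)"
    by (simp add: inner_phi_def dstar_d_def tstar_tstar)
  finally show ?thesis .
qed

theorem lemma3p1:
  fixes \<theta> :: "nat \<Rightarrow> nat \<Rightarrow> real" and h :: nct
  assumes skew: "\<forall>j\<in>{1..4}. \<forall>k\<in>{1..4}. \<theta> j k = - \<theta> k j"
    and hsm: "smooth h"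
    and hsa: "tstar \<theta> h = h"
  shows "\<exists>W :: nct \<Rightarrow> nct.
     bij_betw W Csm Csm
   \<and> (\<forall>a\<in>Csm. \<forall>b\<in>Csm. W (tadd a b) = tadd (W a) (W b))
   \<and> (\<forall>a\<in>Csm. \<forall>c. W (tscale c a) = tscale (cnj c) (W a))
   \<and> (\<forall>a\<in>Csm. \<forall>b\<in>Csm. inner0 \<theta> (W a) (W b) = cnj (inner_phi \<theta> h a b))
   \<and> (\<forall>a\<in>Csm. \<exists>y\<in>Csm. W y = Sop \<theta> h (W a) \<and>
        (\<forall>b\<in>Csm. innerK4 \<theta> h (dop b) (dop a) = inner_phi \<theta> h b y))"
proof (intro exI[of _ "antiu \<theta> h"] conjI ballI allI)
  show "bij_betw (antiu \<theta> h) Csm Csm" by (rule bij_betw_antiu[OF hsm])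
  fix a assume "a \<in> Csm"
  hence a: "smooth a" by (simp add: Csm_def)
  show "antiu \<theta> h (tscale c a) = tscale (cnj c) (antiu \<theta> h a)" for c
    by (rule antiu_tscale)
  show "\<exists>y\<in>Csm. antiu \<theta> h y = Sop \<theta> h (antiu \<theta> h a) \<and>
      (\<forall>b\<in>Csm. innerK4 \<theta> h (dop b) (dop a) = inner_phi \<theta> h b y)"
    using antiu_dstar_d[OF hsm a] innerK4_dop[OF hsm a] smooth_dstar_d[OF hsm a]
    by (intro bexI[where x = "dstar_d \<theta> h a"]) (auto simp: Csm_def)
  fix b assume "b \<in> Csm"
  hence b: "smooth b" by (simp add: Csm_def)
  show "antiu \<theta> h (tadd a b) = tadd (antiu \<theta> h a) (antiu \<theta> h b)"
    by (rule antiu_tadd[OF hsm a b])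
  show "inner0 \<theta> (antiu \<theta> h a) (antiu \<theta> h b) = cnj (inner_phi \<theta> h a b)"
    by (rule inner0_antiu[OF hsm hsa a b])
qed

end
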